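(* Consider the static single-object erasure-coded Byzantine read/write protocol described in the context, run over a fixed set $C$ of $n=|C|$ flexnodes using an $[n,k]$ RLNC code, where at most $b<\frac{|C|-k}{3}$ flexnodes are Byzantine and any $k$ encoded elements suffice to decode. In any execution, if a read operation $\rho$ is concurrent with at most $\delta$ write operations, then $\rho$ (in its get-data primitive) finds a tag appearing in at least $k$ received lists and returns a decoded value $v$.
   Context: Model. $C$ is a fixed finite set of processes ("flexnodes") communicating over asynchronous, reliable point-to-point channels: messages between nonfaulty processes are eventually delivered unaltered, with arbitrary delays. Up to $b$ flexnodes may be Byzantine. Processes invoking reads/writes follow the protocol but may crash. Signatures are unforgeable. An $[n,k]$ RLNC code with $n=|C|$: $\mathrm{Encode}(v)$ produces $|C|$ coded elements, any $k$ of which (from the same encoding) recover $v$. Tags are pairs $(z,w)$, $z\in\mathbb{N}$, $w$ a writer identifier, ordered lexicographically; $t_0$ initial tag. A parameter $\delta\ge1$ is fixed. A quorum is any subset of $C$ of size $\lceil (2|C|+k)/3\rceil$. State. Each flexnode keeps a set $List$ of signed triples $(\langle t,e\rangle,\sigma)$, initially holding the initial pair with tag $t_0$. Primitives (by flexnode $p$): get-tag: query all, each replies with its signed max-tag entry, wait for a quorum, return the maximum verified tag. put-data$(\langle t,v\rangle)$: encode $v$ into $e_1,\dots,e_{|C|}$, send signed $\langle t,e_j\rangle$ to the $j$-th flexnode; a receiver adds it to $List$ if the signature verifies and no entry with tag $t$ exists, then if $|List|>\delta+1$ removes the entries with minimum tag, and acknowledges; wait for a quorum of acknowledgements. get-data: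 query all, each replies with its $List$, wait for a quorum, keep verified pairs, take the maximum tag appearing in at least $k$ received lists, decode and return it; if no such tag exists the primitive does not complete. Operations: read = get-data then put-data of the obtained pair, returning it; write$(v)$ by $w$ = get-tag returning $t$, then put-data$(\langle (t.z+1,w),v\rangle)$. Two operations are concurrent if neither's response precedes the other's invocation. *)

theory Defs
  imports Complex_Main "HOL-Library.Product_Lexorder"
begin

text \<open>
  Flexnodes have type 'n, client process /
  writer identifiers type 'w (linearly ordered, so that tags (z,w) are ordered
  lexicographically via Product_Lexorder), values 'v, coded elements 'e.  Asynchrony, message delays and
  crashes of clients are captured by the fact that steps are interleaved
  arbitrarily and nothing forces any step to happen.
\<close>

type_synonym 'w tag = "nat \<times> 'w"

datatype okind = Rd | Wr

text \<open>PGetTag v R: a write of value v in its get-tag primitive; R j = verified tags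
    received from flexnode j (at most one).
  PGetData R: a read in its get-data primitive; R j = verified pairs of the list
    received from flexnode j.
  PPut t v A: put-data of the pair (t,v); A = flexnodes that acknowledged.\<close>
datatype ('n, 'w, 'v, 'e) phase =
    PGetTag 'v "'n \<Rightarrow> 'w tag set option"
  | PGetData "'n \<Rightarrow> ('w tag \<times> 'e) set option"
  | PPut "'w tag" 'v "'n set"
  | PDone "'w tag" 'v

record ('n, 'w, 'v, 'e) opst =
  kind :: okind
  proc :: 'w
  inv  :: nat
  resp :: "nat option"
  phase :: "('n, 'w, 'v, 'e) phase"

record ('n, 'w, 'v, 'e) state =
  lists :: "'n \<Rightarrow> ('w tag \<times> 'e) set"
  ops   :: "nat \<Rightarrow> ('n, 'w, 'v, 'e) opst option"
  clock :: nat

definition qsize :: "nat \<Rightarrow> nat \<Rightarrow> nat" where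
  "qsize n k = nat \<lceil>(2 * real n + real k) / 3\<rceil>"

definition add_entry :: "nat \<Rightarrow> ('w::linorder tag \<times> 'e) set \<Rightarrow> ('w tag \<times> 'e) \<Rightarrow> ('w tag \<times> 'e) set" where
  "add_entry \<delta> L p =
     (if \<exists>e. (fst p, e) \<in> L then L
      else (let L' = insert p L in
            if card L' > \<delta> + 1 then {x \<in> L'. fst x \<noteq> Min (fst ` L')} else L'))"

text \<open>Pairs carrying a valid (unforgeable) signature: the initial pairs and the
  pairs sent by put-data primitives of (protocol-following) operations.\<close>
definition signed :: "'n set \<Rightarrow> ('v \<Rightarrow> 'n \<Rightarrow> 'e) \<Rightarrow> 'w tag \<Rightarrow> 'v
      \<Rightarrow> ('n, 'w, 'v, 'e) state \<Rightarrow> ('w tag \<times> 'e) set" where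
  "signed C enc t0 v0 s =
     {(t0, enc v0 j) | j. j \<in> C} \<union>
     {(t, enc v j) | t v j. j \<in> C \<and>
        (\<exists>o' op A. ops s o' = Some op \<and> (phase op = PPut t v A \<or> phase op = PDone t v))}"

text \<open>Outcome of get-data on the lists R received from quorum Q: the maximum tag
  appearing in at least k received lists together with the value decoded from
  the received coded elements with that tag; None if no such tag exists (then
  the primitive does not complete).\<close>
definition get_data_result :: "nat \<Rightarrow> (('n \<times> 'e) set \<Rightarrow> 'v) \<Rightarrow> 'n set
      \<Rightarrow> ('n \<Rightarrow> ('w::linorder tag \<times> 'e) set option) \<Rightarrow> ('w tag \<times> 'v) option" where
  "get_data_result k dec Q R =
     (let T = {t. k \<le> card {j \<in> Q. \<exists>e. (t, e) \<in> the (R j)}} in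
      if T = {} then None
      else Some (Max T, dec {(j, e). j \<in> Q \<and> (Max T, e) \<in> the (R j)}))"

definition init :: "'n set \<Rightarrow> ('v \<Rightarrow> 'n \<Rightarrow> 'e) \<Rightarrow> 'w tag \<Rightarrow> 'v \<Rightarrow> ('n, 'w, 'v, 'e) state" where
  "init C enc t0 v0 = \<lparr>lists = (\<lambda>j. {(t0, enc v0 j)}), ops = (\<lambda>_. None), clock = 0\<rparr>"

definition set_phase :: "('n, 'w, 'v, 'e) state \<Rightarrow> nat \<Rightarrow> ('n, 'w, 'v, 'e) opst
      \<Rightarrow> ('n, 'w, 'v, 'e) phase \<Rightarrow> ('n, 'w, 'v, 'e) state" where
  "set_phase s o' op ph =
     s\<lparr>ops := (ops s)(o' \<mapsto> op\<lparr>phase := ph\<rparr>), clock := Suc (clock s)\<rparr>"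

text \<open>Parameters: the flexnode set C, the Byzantine
  set B, code dimension k, parameter \<delta>, encoding enc (enc v j = j-th coded
  element), decoding dec, initial tag t0 and initial value v0.\<close>
inductive step :: "'n set \<Rightarrow> 'n set \<Rightarrow> nat \<Rightarrow> nat \<Rightarrow> ('v \<Rightarrow> 'n \<Rightarrow> 'e)
     \<Rightarrow> (('n \<times> 'e) set \<Rightarrow> 'v) \<Rightarrow> 'w::linorder tag \<Rightarrow> 'v
     \<Rightarrow> ('n, 'w, 'v, 'e) state \<Rightarrow> ('n, 'w, 'v, 'e) state \<Rightarrow> bool"
  for C B k \<delta> enc dec t0 v0
where
  invoke_write:
    "ops s o' = None \<Longrightarrow>
     step C B k \<delta> enc dec t0 v0 s
       (s\<lparr>ops := (ops s)(o' \<mapsto> \<lparr>kind = Wr, proc = w, inv = clock s, resp = None,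
                                  phase = PGetTag v (\<lambda>_. None)\<rparr>),
          clock := Suc (clock s)\<rparr>)"
| invoke_read:
    "ops s o' = None \<Longrightarrow>
     step C B k \<delta> enc dec t0 v0 s
       (s\<lparr>ops := (ops s)(o' \<mapsto> \<lparr>kind = Rd, proc = w, inv = clock s, resp = None,
                                  phase = PGetData (\<lambda>_. None)\<rparr>),
          clock := Suc (clock s)\<rparr>)"
| tag_reply_honest:
    "\<lbrakk>ops s o' = Some op; phase op = PGetTag v R; j \<in> C - B; R j = None\<rbrakk> \<Longrightarrow>
     step C B k \<delta> enc dec t0 v0 s
       (set_phase s o' op (PGetTag v (R(j := Some {Max (fst ` lists s j)}))))"
| tag_reply_byz:
    "\<lbrakk>ops s o' = Some op; phase op = PGetTag v R; j \<in> B; R j = None;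
      X \<subseteq> fst ` signed C enc t0 v0 s; card X \<le> 1\<rbrakk> \<Longrightarrow>
     step C B k \<delta> enc dec t0 v0 s (set_phase s o' op (PGetTag v (R(j := Some X))))"
| tag_done:
    "\<lbrakk>ops s o' = Some op; phase op = PGetTag v R; Q \<subseteq> C; card Q = qsize (card C) k;
      \<forall>j\<in>Q. R j \<noteq> None;
      t = Max (\<Union>j\<in>Q. the (R j))\<rbrakk> \<Longrightarrow>
     step C B k \<delta> enc dec t0 v0 s
       (set_phase s o' op (PPut (Suc (fst t), proc op) v {}))"
| data_reply_honest:
    "\<lbrakk>ops s o' = Some op; phase op = PGetData R; j \<in> C - B; R j = None\<rbrakk> \<Longrightarrow>
     step C B k \<delta> enc dec t0 v0 s (set_phase s o' op (PGetData (R(j := Some (lists s j)))))"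
| data_reply_byz:
    "\<lbrakk>ops s o' = Some op; phase op = PGetData R; j \<in> B; R j = None;
      L \<subseteq> signed C enc t0 v0 s\<rbrakk> \<Longrightarrow>
     step C B k \<delta> enc dec t0 v0 s (set_phase s o' op (PGetData (R(j := Some L))))"
| data_done:
    "\<lbrakk>ops s o' = Some op; phase op = PGetData R; Q \<subseteq> C; card Q = qsize (card C) k;
      \<forall>j\<in>Q. R j \<noteq> None; get_data_result k dec Q R = Some (t, v)\<rbrakk> \<Longrightarrow>
     step C B k \<delta> enc dec t0 v0 s (set_phase s o' op (PPut t v {}))"
| put_deliver:
    "\<lbrakk>ops s o' = Some op; phase op = PPut t v A; j \<in> C - B; j \<notin> A\<rbrakk> \<Longrightarrow>
     step C B k \<delta> enc dec t0 v0 s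
       ((set_phase s o' op (PPut t v (insert j A)))
          \<lparr>lists := (lists s)(j := add_entry \<delta> (lists s j) (t, enc v j))\<rparr>)"
| put_ack_byz:
    "\<lbrakk>ops s o' = Some op; phase op = PPut t v A; j \<in> B; j \<notin> A\<rbrakk> \<Longrightarrow>
     step C B k \<delta> enc dec t0 v0 s (set_phase s o' op (PPut t v (insert j A)))"
| byz_put:
    "\<lbrakk>j \<in> C - B; p \<in> signed C enc t0 v0 s\<rbrakk> \<Longrightarrow>
     step C B k \<delta> enc dec t0 v0 s
       (s\<lparr>lists := (lists s)(j := add_entry \<delta> (lists s j) p), clock := Suc (clock s)\<rparr>)"
| put_done:
    "\<lbrakk>ops s o' = Some op; phase op = PPut t v A; card A \<ge> qsize (card C) k\<rbrakk> \<Longrightarrow>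
     step C B k \<delta> enc dec t0 v0 s
       (s\<lparr>ops := (ops s)(o' \<mapsto> op\<lparr>phase := PDone t v, resp := Some (clock s)\<rparr>),
          clock := Suc (clock s)\<rparr>)"

definition reachable where
  "reachable C B k \<delta> enc dec t0 v0 s \<longleftrightarrow>
     (step C B k \<delta> enc dec t0 v0)\<^sup>*\<^sup>* (init C enc t0 v0) s"

definition precedes :: "('n, 'w, 'v, 'e) opst \<Rightarrow> ('n, 'w, 'v, 'e) opst \<Rightarrow> bool" where
  "precedes a c \<longleftrightarrow> (\<exists>r. resp a = Some r \<and> r < inv c)"

definition concurrent :: "('n, 'w, 'v, 'e) opst \<Rightarrow> ('n, 'w, 'v, 'e) opst \<Rightarrow> bool" where
  "concurrent a c \<longleftrightarrow> \<not> precedes a c \<and> \<not> precedes c a"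

end

theory Submission
  imports Defs
begin

text \<open>Call a list L covering a tag t if L still stores t or holds \<delta> + 1 tags larger than t.
  A flexnode evicts only its minimum tags, and only when it holds more than \<delta> + 1
  entries, so once an honest list covers a tag it keeps covering it. A put-data completes only
  after a quorum has acknowledged, hence the initial tag and the tag of every completed
  operation are covered by the lists of the honest members of a quorum, and so are the replies
  these flexnodes later send to a read. Let t be the largest tag completed before the read was
  invoked. Every tag above t belongs to a write that is concurrent with the read, so there are
  at most \<delta> of them, and covering forces the honest replies to contain t itself. Since
  b < (|C| - k)/3, those honest flexnodes include at least k members of the read's quorum, so
  t occurs in at least k received lists.\<close>

section \<open>Lists covering a tag\<close>

definition covers :: "nat \<Rightarrow> ('w::linorder tag \<times> 'e) set \<Rightarrow> 'w tag \<Rightarrow> bool" where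
  "covers \<delta> L t \<longleftrightarrow> (\<exists>e. (t, e) \<in> L) \<or> \<delta> + 1 \<le> card {t' \<in> fst ` L. t < t'}"

lemma finite_add_entry: "finite L \<Longrightarrow> finite (add_entry \<delta> L p)"
  unfolding add_entry_def Let_def by auto

lemma fst_add_entry_subset: "fst ` add_entry \<delta> L p \<subseteq> insert (fst p) (fst ` L)"
  unfolding add_entry_def Let_def by auto

lemma inj_on_fst_add_entry:
  assumes "inj_on fst L"
  shows "inj_on fst (add_entry \<delta> L p)"
proof (cases "\<exists>e. (fst p, e) \<in> L")
  case True
  then show ?thesis using assms unfolding add_entry_def by auto
next
  case False
  then have "inj_on fst (insert p L)" using assms by (auto simp: inj_on_def image_iff)
  then show ?thesis using False unfolding add_entry_def Let_def by (auto intro: inj_on_subset)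
qed

lemma covers_drop_min:
  assumes fin: "finite L" and inj: "inj_on fst L" and cov: "covers \<delta> L t" and big: "\<delta> + 1 < card L"
  shows "covers \<delta> {x \<in> L. fst x \<noteq> Min (fst ` L)} t"
proof -
  define m where "m = Min (fst ` L)"
  have "L \<noteq> {}" using big by auto
  then have m: "m \<in> fst ` L" "\<forall>t' \<in> fst ` L. m \<le> t'" using fin by (simp_all add: m_def)
  have img: "fst ` {x \<in> L. fst x \<noteq> m} = fst ` L - {m}" by auto
  have card_img: "card (fst ` L - {m}) = card L - 1"
    using m(1) fin inj by (simp add: card_image)
  have "covers \<delta> {x \<in> L. fst x \<noteq> m} t"
  proof (cases "t \<le> m")
    case True
    then have "{t' \<in> fst ` L - {m}. t < t'} = fst ` L - {m}" using m(2) by force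
    then show ?thesis using card_img big unfolding covers_def img by auto
  next
    case False
    then have "{t' \<in> fst ` L - {m}. t < t'} = {t' \<in> fst ` L. t < t'}" by auto
    then show ?thesis using cov False unfolding covers_def img by auto
  qed
  then show ?thesis unfolding m_def .
qed

lemma covers_insert:
  assumes "finite L" "covers \<delta> L t \<or> fst p = t"
  shows "covers \<delta> (insert p L) t"
proof -
  have "card {t' \<in> fst ` L. t < t'} \<le> card {t' \<in> fst ` insert p L. t < t'}"
    using assms(1) by (intro card_mono) auto
  then show ?thesis using assms unfolding covers_def by (cases p) force
qed

lemma covers_add_entry:
  assumes "finite L" "inj_on fst L" "covers \<delta> L t \<or> fst p = t"
  shows "covers \<delta> (add_entry \<delta> L p) t"
proof (cases "\<exists>e. (fst p, e) \<in> L")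
  case True
  then show ?thesis using assms unfolding add_entry_def covers_def by auto
next
  case False
  have fin: "finite (insert p L)" and inj: "inj_on fst (insert p L)"
    using assms False by (auto simp: inj_on_def image_iff)
  have cov: "covers \<delta> (insert p L) t" using covers_insert assms by blast
  show ?thesis
    using False covers_drop_min [OF fin inj cov] cov unfolding add_entry_def Let_def by presburger
qed

lemma mem_of_covers:
  assumes "covers \<delta> L t" "fst ` L \<subseteq> X" "finite X" "card {t' \<in> X. t < t'} \<le> \<delta>"
  shows "\<exists>e. (t, e) \<in> L"
proof (rule ccontr)
  assume "\<nexists>e. (t, e) \<in> L"
  then have "\<delta> + 1 \<le> card {t' \<in> fst ` L. t < t'}" using assms(1) unfolding covers_def by blast
  also have "\<dots> \<le> card {t' \<in> X. t < t'}" using assms(2,3) by (intro card_mono) auto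
  finally show False using assms(4) by simp
qed

section \<open>Quorums and the outcome of get-data\<close>

lemma qsize_le: "k \<le> n \<Longrightarrow> qsize n k \<le> n"
  unfolding qsize_def by (simp add: ceiling_le_iff)

lemma qsize_ge: "(2 * real n + real k) / 3 \<le> real (qsize n k)"
  unfolding qsize_def by linarith

lemma card_inter_quorum_ge:
  assumes "finite C" "G \<subseteq> C" "Q \<subseteq> C"
    and "qsize (card C) k \<le> card G + f" "card Q = qsize (card C) k"
    and "real f < (real (card C) - real k) / 3"
  shows "k \<le> card (G \<inter> Q)"
proof -
  have "card G + card Q = card (G \<union> Q) + card (G \<inter> Q)"
    using assms(1-3) by (intro card_Un_Int) (auto intro: finite_subset)
  moreover have "card (G \<union> Q) \<le> card C" using assms(1-3) by (intro card_mono) auto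
  ultimately have "real (card G) + real (card Q) \<le> real (card C) + real (card (G \<inter> Q))"
    by (metis of_nat_add of_nat_le_iff add_le_mono1)
  moreover have "real (qsize (card C) k) \<le> real (card G) + real f"
    using assms(4) by (metis of_nat_add of_nat_le_iff)
  moreover have "real (card Q) = real (qsize (card C) k)" using assms(5) by simp
  moreover have "2 * real (card C) + real k \<le> 3 * real (qsize (card C) k)"
    using qsize_ge [of "card C" k] by simp
  moreover have "3 * real f < real (card C) - real k" using assms(6) by simp
  ultimately have "real k \<le> real (card (G \<inter> Q))" by linarith
  then show ?thesis by simp
qed

lemma get_data_result_defined:
  "k \<le> card {j \<in> Q. \<exists>e. (t, e) \<in> the (R j)} \<Longrightarrow> \<exists>t v. get_data_result k dec Q R = Some (t, v)"
  unfolding get_data_result_def Let_def by (cases t) auto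

lemma get_data_result_tag_mem:
  assumes "get_data_result k dec Q R = Some (t, v)" "1 \<le> k" "finite X"
    and "\<forall>j\<in>Q. \<exists>L. R j = Some L \<and> fst ` L \<subseteq> X"
  shows "t \<in> X"
proof -
  define T where "T = {t. k \<le> card {j \<in> Q. \<exists>e. (t, e) \<in> the (R j)}}"
  have res: "T \<noteq> {}" "t = Max T"
    using assms(1) unfolding get_data_result_def Let_def T_def [symmetric] by (auto split: if_splits)
  have "T \<subseteq> X"
  proof
    fix t' assume "t' \<in> T"
    then have "{j \<in> Q. \<exists>e. (t', e) \<in> the (R j)} \<noteq> {}" using assms(2) unfolding T_def by force
    then show "t' \<in> X" using assms(4) by force
  qed
  then show ?thesis using res assms(3) by (metis Max_in finite_subset subsetD)
qed

section \<open>The invariant\<close>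

fun put_tag :: "('n, 'w, 'v, 'e) phase \<Rightarrow> 'w tag option" where
  "put_tag (PPut t v A) = Some t"
| "put_tag (PDone t v) = Some t"
| "put_tag _ = None"

definition state_tags :: "('n, 'w, 'v, 'e) state \<Rightarrow> 'w tag \<Rightarrow> 'w tag set" where
  "state_tags s t0 = insert t0 {t. \<exists>i op. ops s i = Some op \<and> put_tag (phase op) = Some t}"

definition completed_tags_before :: "('n, 'w, 'v, 'e) state \<Rightarrow> 'w tag \<Rightarrow> nat \<Rightarrow> 'w tag set" where
  "completed_tags_before s t0 T = insert t0
     {t. \<exists>i op v r. ops s i = Some op \<and> phase op = PDone t v \<and> resp op = Some r \<and> r < T}"

lemma completed_tags_before_subset: "completed_tags_before s t0 T \<subseteq> state_tags s t0"
  unfolding completed_tags_before_def state_tags_def by force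

lemma fst_signed_subset: "fst ` signed C enc t0 v0 s \<subseteq> state_tags s t0"
  unfolding signed_def state_tags_def by force

lemma finite_state_tags: "finite (dom (ops s)) \<Longrightarrow> finite (state_tags s t0)"
proof -
  assume "finite (dom (ops s))"
  moreover have "state_tags s t0 \<subseteq> insert t0 ((\<lambda>i. the (put_tag (phase (the (ops s i))))) ` dom (ops s))"
    unfolding state_tags_def by force
  ultimately show ?thesis by (meson finite_imageI finite_insert finite_subset)
qed

definition on_honest_quorum :: "'n set \<Rightarrow> 'n set \<Rightarrow> nat \<Rightarrow> ('n \<Rightarrow> bool) \<Rightarrow> bool" where
  "on_honest_quorum C B k P \<longleftrightarrow>
     (\<exists>G \<subseteq> C - B. qsize (card C) k \<le> card G + card B \<and> (\<forall>j\<in>G. P j))"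

lemma on_honest_quorum_mono:
  "on_honest_quorum C B k P \<Longrightarrow> (\<And>j. j \<in> C - B \<Longrightarrow> P j \<Longrightarrow> P' j) \<Longrightarrow> on_honest_quorum C B k P'"
  unfolding on_honest_quorum_def by blast

lemma on_honest_quorum_of_acks:
  assumes "finite C" "B \<subseteq> C" "A \<subseteq> C" "qsize (card C) k \<le> card A" "\<forall>j\<in>A - B. P j"
  shows "on_honest_quorum C B k P"
proof -
  have "card A \<le> card ((A - B) \<union> B)"
    using assms(1-3) by (intro card_mono) (auto intro: finite_subset)
  also have "\<dots> \<le> card (A - B) + card B" by (rule card_Un_le)
  finally show ?thesis using assms unfolding on_honest_quorum_def by (intro exI [of _ "A - B"]) auto
qed

definition ops_wf :: "('n, 'w, 'v, 'e) state \<Rightarrow> bool" where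
  "ops_wf s \<longleftrightarrow> finite (dom (ops s)) \<and> (\<forall>i op. ops s i = Some op \<longrightarrow>
     inv op < clock s \<and> (\<forall>r. resp op = Some r \<longrightarrow> r < clock s) \<and>
     (resp op = None \<longleftrightarrow> (\<forall>t v. phase op \<noteq> PDone t v)) \<and>
     (\<forall>v R. phase op = PGetTag v R \<longrightarrow> kind op = Wr))"

definition lists_wf :: "('n, 'w::linorder, 'v, 'e) state \<Rightarrow> 'w tag \<Rightarrow> bool" where
  "lists_wf s t0 \<longleftrightarrow>
     (\<forall>j. finite (lists s j) \<and> inj_on fst (lists s j) \<and> fst ` lists s j \<subseteq> state_tags s t0)"

definition tags_of_writes :: "('n, 'w::linorder, 'v, 'e) state \<Rightarrow> 'w tag \<Rightarrow> bool" where
  "tags_of_writes s t0 \<longleftrightarrow> (\<forall>t \<in> state_tags s t0. t = t0 \<or>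
     (\<exists>w opw. ops s w = Some opw \<and> kind opw = Wr \<and> put_tag (phase opw) = Some t))"

definition received_tags_known :: "('n, 'w::linorder, 'v, 'e) state \<Rightarrow> 'w tag \<Rightarrow> bool" where
  "received_tags_known s t0 \<longleftrightarrow> (\<forall>i op R j L. ops s i = Some op \<longrightarrow> phase op = PGetData R \<longrightarrow>
     R j = Some L \<longrightarrow> fst ` L \<subseteq> state_tags s t0)"

definition acks_cover :: "'n set \<Rightarrow> 'n set \<Rightarrow> nat \<Rightarrow> ('n, 'w::linorder, 'v, 'e) state \<Rightarrow> bool" where
  "acks_cover C B \<delta> s \<longleftrightarrow> (\<forall>i op t v A. ops s i = Some op \<longrightarrow> phase op = PPut t v A \<longrightarrow>
     A \<subseteq> C \<and> (\<forall>j \<in> A - B. covers \<delta> (lists s j) t))"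

definition completed_covered :: "'n set \<Rightarrow> 'n set \<Rightarrow> nat \<Rightarrow> nat \<Rightarrow> 'w tag
    \<Rightarrow> ('n, 'w::linorder, 'v, 'e) state \<Rightarrow> bool" where
  "completed_covered C B k \<delta> t0 s \<longleftrightarrow> (\<forall>t \<in> completed_tags_before s t0 (clock s).
     on_honest_quorum C B k (\<lambda>j. covers \<delta> (lists s j) t))"

definition replies_cover :: "'n set \<Rightarrow> 'n set \<Rightarrow> nat \<Rightarrow> nat \<Rightarrow> 'w tag
    \<Rightarrow> ('n, 'w::linorder, 'v, 'e) state \<Rightarrow> bool" where
  "replies_cover C B k \<delta> t0 s \<longleftrightarrow> (\<forall>i op R. ops s i = Some op \<longrightarrow> phase op = PGetData R \<longrightarrow>
     (\<forall>t \<in> completed_tags_before s t0 (inv op). on_honest_quorum C B k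
        (\<lambda>j. covers \<delta> (lists s j) t \<and> (\<forall>L. R j = Some L \<longrightarrow> covers \<delta> L t))))"

definition protocol_inv :: "'n set \<Rightarrow> 'n set \<Rightarrow> nat \<Rightarrow> nat \<Rightarrow> 'w tag
    \<Rightarrow> ('n, 'w::linorder, 'v, 'e) state \<Rightarrow> bool" where
  "protocol_inv C B k \<delta> t0 s \<longleftrightarrow> ops_wf s \<and> lists_wf s t0 \<and> tags_of_writes s t0 \<and>
     received_tags_known s t0 \<and> acks_cover C B \<delta> s \<and> completed_covered C B k \<delta> t0 s \<and>
     replies_cover C B k \<delta> t0 s"

lemma set_phase_simps [simp]:
  "ops (set_phase s o' op ph) = (ops s)(o' \<mapsto> op\<lparr>phase := ph\<rparr>)"
  "lists (set_phase s o' op ph) = lists s"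
  "clock (set_phase s o' op ph) = Suc (clock s)"
  unfolding set_phase_def by simp_all

section \<open>Preservation of the invariant\<close>

context
  fixes C B :: "'n set" and k \<delta> :: nat and enc :: "'v \<Rightarrow> 'n \<Rightarrow> 'e"
    and dec :: "('n \<times> 'e) set \<Rightarrow> 'v" and t0 :: "'w::linorder tag" and v0 :: 'v
begin

abbreviation step' where "step' \<equiv> step C B k \<delta> enc dec t0 v0"

lemma step_ops_persist:
  "step' s s' \<Longrightarrow> ops s i = Some op \<Longrightarrow>
   \<exists>op'. ops s' i = Some op' \<and> kind op' = kind op \<and>
     (put_tag (phase op) \<noteq> None \<longrightarrow> put_tag (phase op') = put_tag (phase op))"
  by (induction rule: step.induct) auto

lemma state_tags_mono: "step' s s' \<Longrightarrow> state_tags s t0 \<subseteq> state_tags s' t0"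
  unfolding state_tags_def using step_ops_persist by fastforce

lemma step_lists_cases:
  "step' s s' \<Longrightarrow> lists s' j = lists s j \<or>
     (j \<in> C - B \<and> (\<exists>p. fst p \<in> state_tags s t0 \<and> lists s' j = add_entry \<delta> (lists s j) p))"
proof (induction rule: step.induct)
  case (put_deliver s o' op t v A j')
  have "t \<in> state_tags s t0" using put_deliver unfolding state_tags_def by force
  show ?case
  proof (cases "j = j'")
    case True
    then have "lists (set_phase s o' op (PPut t v (insert j' A))
        \<lparr>lists := (lists s)(j' := add_entry \<delta> (lists s j') (t, enc v j'))\<rparr>) j
      = add_entry \<delta> (lists s j) (t, enc v j)" by simp
    then show ?thesis using True put_deliver \<open>t \<in> state_tags s t0\<close> by (metis fst_conv)
  qed simp
next
  case (byz_put j' p s)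
  then have "fst p \<in> state_tags s t0" by (meson fst_signed_subset image_subset_iff)
  with byz_put show ?case by (cases "j = j'") (simp_all, metis prod.collapse)
qed simp_all

lemma step_put_tag_cases:
  "step' s s' \<Longrightarrow> ops s' i = Some op' \<Longrightarrow> put_tag (phase op') = Some t \<Longrightarrow>
   (\<exists>op. ops s i = Some op \<and> put_tag (phase op) = Some t) \<or>
   (\<exists>op v R. ops s i = Some op \<and> phase op = PGetTag v R \<and> kind op' = kind op) \<or>
   (\<exists>op R Q v. ops s i = Some op \<and> phase op = PGetData R \<and> (\<forall>j\<in>Q. R j \<noteq> None) \<and>
      get_data_result k dec Q R = Some (t, v))"
  by (induction rule: step.induct) (fastforce split: if_splits)+

lemma step_put_cases:
  "step' s s' \<Longrightarrow> ops s' i = Some op' \<Longrightarrow> phase op' = PPut t v A' \<Longrightarrow>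
   A' = {} \<or> (\<exists>op A. ops s i = Some op \<and> phase op = PPut t v A \<and> (A' = A \<or> (\<exists>j. A' = insert j A \<and>
      (j \<in> B \<or> (j \<in> C - B \<and> lists s' j = add_entry \<delta> (lists s j) (t, enc v j))))))"
  by (induction rule: step.induct) (fastforce split: if_splits)+

lemma step_done_cases:
  "step' s s' \<Longrightarrow> ops s' i = Some op' \<Longrightarrow> phase op' = PDone t v \<Longrightarrow>
   ops s i = Some op' \<or> (\<exists>op A. ops s i = Some op \<and> phase op = PPut t v A \<and>
     qsize (card C) k \<le> card A \<and> resp op' = Some (clock s))"
  by (induction rule: step.induct) (fastforce split: if_splits)+

lemma step_get_data_cases:
  "step' s s' \<Longrightarrow> ops s' i = Some op' \<Longrightarrow> phase op' = PGetData R \<Longrightarrow>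
   (ops s i = None \<and> inv op' = clock s \<and> R = Map.empty) \<or>
   (\<exists>op R0. ops s i = Some op \<and> phase op = PGetData R0 \<and> inv op' = inv op \<and>
     (\<forall>j. R j = R0 j \<or> (j \<in> C - B \<and> R j = Some (lists s j)) \<or>
       (j \<in> B \<and> (\<exists>L. L \<subseteq> signed C enc t0 v0 s \<and> R j = Some L))))"
proof (induction rule: step.induct)
  case (invoke_read s o' w)
  then show ?case by (cases "i = o'") auto
next
  case (data_reply_honest s o' op R0 j)
  show ?case
  proof (cases "i = o'")
    case True
    with data_reply_honest have "op' = op\<lparr>phase := PGetData (R0(j \<mapsto> lists s j))\<rparr>" by simp
    then have "R = R0(j \<mapsto> lists s j)" "inv op' = inv op" using data_reply_honest.prems by simp_all
    then show ?thesis using True data_reply_honest.hyps by auto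
  qed (use data_reply_honest in simp)
next
  case (data_reply_byz s o' op R0 j L)
  show ?case
  proof (cases "i = o'")
    case True
    with data_reply_byz have "op' = op\<lparr>phase := PGetData (R0(j \<mapsto> L))\<rparr>" by simp
    then have "R = R0(j \<mapsto> L)" "inv op' = inv op" using data_reply_byz.prems by simp_all
    then show ?thesis using True data_reply_byz.hyps by auto
  qed (use data_reply_byz in simp)
qed (auto split: if_splits)

lemma completed_tags_before_step:
  assumes "step' s s'" "T \<le> clock s"
  shows "completed_tags_before s' t0 T \<subseteq> completed_tags_before s t0 T"
proof
  fix t assume "t \<in> completed_tags_before s' t0 T"
  then consider "t = t0" | i op' v r where "ops s' i = Some op'" "phase op' = PDone t v"
    "resp op' = Some r" "r < T" unfolding completed_tags_before_def by blast
  then show "t \<in> completed_tags_before s t0 T"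
  proof cases
    case 2
    then show ?thesis using step_done_cases [OF assms(1) 2(1,2)] assms(2)
      unfolding completed_tags_before_def by auto
  qed (simp add: completed_tags_before_def)
qed

lemma ops_wf_step: "step' s s' \<Longrightarrow> ops_wf s \<Longrightarrow> ops_wf s'"
  unfolding ops_wf_def by (induction rule: step.induct) (auto simp: less_Suc_eq)

lemma lists_wf_step:
  assumes st: "step' s s'" and wf: "lists_wf s t0"
  shows "lists_wf s' t0"
  unfolding lists_wf_def
proof
  fix j
  have tags: "state_tags s t0 \<subseteq> state_tags s' t0" using state_tags_mono [OF st] .
  have old: "finite (lists s j)" "inj_on fst (lists s j)" "fst ` lists s j \<subseteq> state_tags s t0"
    using wf unfolding lists_wf_def by auto
  from step_lists_cases [OF st, of j]
  show "finite (lists s' j) \<and> inj_on fst (lists s' j) \<and> fst ` lists s' j \<subseteq> state_tags s' t0"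
  proof (elim disjE conjE exE)
    assume "lists s' j = lists s j"
    then show ?thesis using old tags by auto
  next
    fix p assume p: "fst p \<in> state_tags s t0" "lists s' j = add_entry \<delta> (lists s j) p"
    have "insert (fst p) (fst ` lists s j) \<subseteq> state_tags s' t0" using p(1) old(3) tags by blast
    then have "fst ` lists s' j \<subseteq> state_tags s' t0"
      unfolding p(2) using fst_add_entry_subset by (rule subset_trans [rotated])
    then show ?thesis using p(2) finite_add_entry [OF old(1)] inj_on_fst_add_entry [OF old(2)] by simp
  qed
qed

lemma covers_lists_step:
  assumes "step' s s'" "lists_wf s t0" "covers \<delta> (lists s j) t"
  shows "covers \<delta> (lists s' j) t"
  using step_lists_cases [OF assms(1), of j] covers_add_entry assms(2,3) unfolding lists_wf_def by metis

lemma received_tags_known_step: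
  assumes st: "step' s s'" and rt: "received_tags_known s t0" and wf: "lists_wf s t0"
  shows "received_tags_known s' t0"
  unfolding received_tags_known_def
proof (intro allI impI)
  fix i op' R j L assume op': "ops s' i = Some op'" "phase op' = PGetData R" and L: "R j = Some L"
  from step_get_data_cases [OF st op'] have "fst ` L \<subseteq> state_tags s t0"
  proof
    assume "ops s i = None \<and> inv op' = clock s \<and> R = Map.empty"
    then show ?thesis using L by simp
  next
    assume "\<exists>op R0. ops s i = Some op \<and> phase op = PGetData R0 \<and> inv op' = inv op \<and>
      (\<forall>j. R j = R0 j \<or> (j \<in> C - B \<and> R j = Some (lists s j)) \<or>
        (j \<in> B \<and> (\<exists>L. L \<subseteq> signed C enc t0 v0 s \<and> R j = Some L)))"
    then obtain op R0 where op: "ops s i = Some op" "phase op = PGetData R0"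
      and "R j = R0 j \<or> (j \<in> C - B \<and> R j = Some (lists s j)) \<or>
        (j \<in> B \<and> (\<exists>L. L \<subseteq> signed C enc t0 v0 s \<and> R j = Some L))" by blast
    then consider "R0 j = Some L" | "L = lists s j" | "L \<subseteq> signed C enc t0 v0 s" using L by auto
    then show ?thesis
    proof cases
      case 1
      then show ?thesis using rt op unfolding received_tags_known_def by blast
    next
      case 2
      then show ?thesis using wf unfolding lists_wf_def by blast
    next
      case 3
      then show ?thesis using fst_signed_subset by (rule image_mono [THEN order_trans])
    qed
  qed
  then show "fst ` L \<subseteq> state_tags s' t0" using state_tags_mono [OF st] by blast
qed

lemma tags_of_writes_step:
  assumes st: "step' s s'" and k: "1 \<le> k" and wf: "ops_wf s"
    and tw: "tags_of_writes s t0" and rt: "received_tags_known s t0"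
  shows "tags_of_writes s' t0"
  unfolding tags_of_writes_def
proof
  fix t assume t: "t \<in> state_tags s' t0"
  let ?write_tag = "\<lambda>t. \<exists>w opw. ops s' w = Some opw \<and> kind opw = Wr \<and> put_tag (phase opw) = Some t"
  have old: "t = t0 \<or> ?write_tag t" if "t \<in> state_tags s t0" for t
  proof -
    from tw that consider "t = t0"
      | w opw where "ops s w = Some opw" "kind opw = Wr" "put_tag (phase opw) = Some t"
      unfolding tags_of_writes_def by (elim ballE) auto
    then show ?thesis
    proof cases
      case 2
      then show ?thesis using step_ops_persist [OF st 2(1)] by force
    qed simp
  qed
  show "t = t0 \<or> ?write_tag t"
  proof (cases "t = t0")
    case False
    then obtain i op' where op': "ops s' i = Some op'" "put_tag (phase op') = Some t"
      using t unfolding state_tags_def by auto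
    from step_put_tag_cases [OF st op'] show ?thesis
    proof (elim disjE exE conjE)
      fix op assume "ops s i = Some op" "put_tag (phase op) = Some t"
      then have "t \<in> state_tags s t0" unfolding state_tags_def by blast
      then show ?thesis by (rule old)
    next
      fix op v R assume "ops s i = Some op" "phase op = PGetTag v R" "kind op' = kind op"
      then have "kind op' = Wr" using wf unfolding ops_wf_def by auto
      then show ?thesis using op' by blast
    next
      fix op R Q v assume op: "ops s i = Some op" "phase op = PGetData R"
        and Q: "\<forall>j\<in>Q. R j \<noteq> None" and res: "get_data_result k dec Q R = Some (t, v)"
      have "\<forall>j\<in>Q. \<exists>L. R j = Some L \<and> fst ` L \<subseteq> state_tags s t0"
        using Q rt op unfolding received_tags_known_def by auto
      moreover have "finite (state_tags s t0)" using wf finite_state_tags unfolding ops_wf_def by blast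
      ultimately have "t \<in> state_tags s t0" using get_data_result_tag_mem [OF res k] by blast
      then show ?thesis by (rule old)
    qed
  qed simp
qed

lemma acks_cover_step:
  assumes st: "step' s s'" and BC: "B \<subseteq> C" and wf: "lists_wf s t0" and ac: "acks_cover C B \<delta> s"
  shows "acks_cover C B \<delta> s'"
  unfolding acks_cover_def
proof (intro allI impI)
  fix i op' t v A' assume op': "ops s' i = Some op'" "phase op' = PPut t v A'"
  from step_put_cases [OF st op'] show "A' \<subseteq> C \<and> (\<forall>j \<in> A' - B. covers \<delta> (lists s' j) t)"
  proof
    assume "A' = {}" then show ?thesis by simp
  next
    assume "\<exists>op A. ops s i = Some op \<and> phase op = PPut t v A \<and> (A' = A \<or> (\<exists>j. A' = insert j A \<and>
      (j \<in> B \<or> (j \<in> C - B \<and> lists s' j = add_entry \<delta> (lists s j) (t, enc v j)))))"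
    then obtain op A where "ops s i = Some op" "phase op = PPut t v A"
      and new: "A' = A \<or> (\<exists>j. A' = insert j A \<and>
        (j \<in> B \<or> (j \<in> C - B \<and> lists s' j = add_entry \<delta> (lists s j) (t, enc v j))))" by blast
    then have "A \<subseteq> C" "\<forall>j \<in> A - B. covers \<delta> (lists s' j) t"
      using ac covers_lists_step [OF st wf] unfolding acks_cover_def by blast+
    moreover have "covers \<delta> (lists s' j) t"
      if "lists s' j = add_entry \<delta> (lists s j) (t, enc v j)" for j
      using that wf covers_add_entry unfolding lists_wf_def by (metis fst_conv)
    ultimately show ?thesis using new BC by auto
  qed
qed


lemma completed_covered_step:
  assumes st: "step' s s'" and C: "finite C" "B \<subseteq> C"
    and wf: "ops_wf s" "lists_wf s t0" and ac: "acks_cover C B \<delta> s"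
    and cc: "completed_covered C B k \<delta> t0 s"
  shows "completed_covered C B k \<delta> t0 s'"
  unfolding completed_covered_def
proof
  fix t assume t: "t \<in> completed_tags_before s' t0 (clock s')"
  have "on_honest_quorum C B k (\<lambda>j. covers \<delta> (lists s j) t)"
  proof (cases "t \<in> completed_tags_before s t0 (clock s)")
    case True
    then show ?thesis using cc unfolding completed_covered_def by blast
  next
    case False
    then obtain i op' v r where op': "ops s' i = Some op'" "phase op' = PDone t v"
      "resp op' = Some r"
      using t unfolding completed_tags_before_def by auto
    from step_done_cases [OF st op'(1,2)] show ?thesis
    proof
      assume old: "ops s i = Some op'"
      then have "r < clock s" using op'(3) wf(1) unfolding ops_wf_def by blast
      then have "t \<in> completed_tags_before s t0 (clock s)"
        using old op'(2,3) unfolding completed_tags_before_def by blast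
      then show ?thesis using False by contradiction
    next
      assume "\<exists>op A. ops s i = Some op \<and> phase op = PPut t v A \<and>
        qsize (card C) k \<le> card A \<and> resp op' = Some (clock s)"
      then obtain op A where op: "ops s i = Some op" "phase op = PPut t v A"
        and quorum: "qsize (card C) k \<le> card A" by blast
      then have "A \<subseteq> C" "\<forall>j \<in> A - B. covers \<delta> (lists s j) t"
        using ac unfolding acks_cover_def by blast+
      then show ?thesis using on_honest_quorum_of_acks [OF C _ quorum] by blast
    qed
  qed
  then show "on_honest_quorum C B k (\<lambda>j. covers \<delta> (lists s' j) t)"
    by (rule on_honest_quorum_mono) (rule covers_lists_step [OF st wf(2)])
qed

lemma replies_cover_step:
  assumes st: "step' s s'" and wf: "ops_wf s" "lists_wf s t0"
    and cc: "completed_covered C B k \<delta> t0 s" and rc: "replies_cover C B k \<delta> t0 s"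
  shows "replies_cover C B k \<delta> t0 s'"
  unfolding replies_cover_def
proof (intro allI impI ballI)
  fix i op' R t
  assume op': "ops s' i = Some op'" "phase op' = PGetData R"
    and t: "t \<in> completed_tags_before s' t0 (inv op')"
  from step_get_data_cases [OF st op']
  show "on_honest_quorum C B k (\<lambda>j. covers \<delta> (lists s' j) t \<and> (\<forall>L. R j = Some L \<longrightarrow> covers \<delta> L t))"
  proof
    assume new: "ops s i = None \<and> inv op' = clock s \<and> R = Map.empty"
    then have "t \<in> completed_tags_before s t0 (clock s)"
      using t completed_tags_before_step [OF st] by auto
    then have "on_honest_quorum C B k (\<lambda>j. covers \<delta> (lists s j) t)"
      using cc unfolding completed_covered_def by blast
    then show ?thesis
      by (rule on_honest_quorum_mono) (simp add: new covers_lists_step [OF st wf(2)])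
  next
    assume "\<exists>op R0. ops s i = Some op \<and> phase op = PGetData R0 \<and> inv op' = inv op \<and>
      (\<forall>j. R j = R0 j \<or> (j \<in> C - B \<and> R j = Some (lists s j)) \<or>
        (j \<in> B \<and> (\<exists>L. L \<subseteq> signed C enc t0 v0 s \<and> R j = Some L)))"
    then obtain op R0 where op: "ops s i = Some op" "phase op = PGetData R0" "inv op' = inv op"
      and R: "\<And>j. j \<in> C - B \<Longrightarrow> R j = R0 j \<or> R j = Some (lists s j)" by blast
    have "inv op \<le> clock s" using wf(1) op(1) unfolding ops_wf_def by (simp add: less_imp_le)
    then have "t \<in> completed_tags_before s t0 (inv op)"
      using t op(3) completed_tags_before_step [OF st] by auto
    then have "on_honest_quorum C B k
        (\<lambda>j. covers \<delta> (lists s j) t \<and> (\<forall>L. R0 j = Some L \<longrightarrow> covers \<delta> L t))"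
      using rc op(1,2) unfolding replies_cover_def by blast
    then show ?thesis
      by (rule on_honest_quorum_mono) (use R covers_lists_step [OF st wf(2)] in fastforce)
  qed
qed

lemma protocol_inv_init:
  assumes "finite C" "B \<subseteq> C" "k \<le> card C"
  shows "protocol_inv C B k \<delta> t0 (init C enc t0 v0)"
proof -
  let ?s = "init C enc t0 v0"
  have "on_honest_quorum C B k (\<lambda>j. covers \<delta> (lists ?s j) t0)"
    using assms by (intro on_honest_quorum_of_acks [of C B C]) (simp_all add: qsize_le covers_def init_def)
  moreover have "completed_tags_before ?s t0 T = {t0}" for T
    unfolding completed_tags_before_def init_def by simp
  ultimately show ?thesis
    unfolding protocol_inv_def ops_wf_def lists_wf_def tags_of_writes_def received_tags_known_def
      acks_cover_def completed_covered_def replies_cover_def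
    by (simp add: init_def state_tags_def)
qed

lemma protocol_inv_step:
  assumes st: "step' s s'" and C: "finite C" "B \<subseteq> C" and k: "1 \<le> k"
    and inv: "protocol_inv C B k \<delta> t0 s"
  shows "protocol_inv C B k \<delta> t0 s'"
proof -
  have I: "ops_wf s" "lists_wf s t0" "tags_of_writes s t0" "received_tags_known s t0"
    "acks_cover C B \<delta> s" "completed_covered C B k \<delta> t0 s" "replies_cover C B k \<delta> t0 s"
    using inv unfolding protocol_inv_def by simp_all
  show ?thesis
    unfolding protocol_inv_def
    using ops_wf_step [OF st I(1)] lists_wf_step [OF st I(2)] tags_of_writes_step [OF st k I(1,3,4)]
      received_tags_known_step [OF st I(4,2)] acks_cover_step [OF st C(2) I(2,5)]
      completed_covered_step [OF st C I(1,2,5,6)] replies_cover_step [OF st I(1,2,6,7)]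
    by simp
qed

end

lemma protocol_inv_reachable:
  assumes "reachable C B k \<delta> enc dec t0 v0 s" "finite C" "B \<subseteq> C" "1 \<le> k" "k \<le> card C"
  shows "protocol_inv C B k \<delta> t0 s"
  using assms(1) unfolding reachable_def
proof (induction rule: rtranclp_induct)
  case base
  show ?case using assms(2,3,5) by (rule protocol_inv_init)
next
  case (step s s')
  then show ?case using assms(2-4) by (blast intro: protocol_inv_step)
qed

section \<open>Tags seen by a read\<close>

lemma card_tags_above_le_concurrent_writes:
  assumes wf: "ops_wf s" and tw: "tags_of_writes s t0"
    and pending: "resp op = None"
    and ts: "\<forall>t \<in> completed_tags_before s t0 (inv op). t \<le> ts"
  shows "card {t \<in> state_tags s t0. ts < t}
    \<le> card {w. \<exists>opw. ops s w = Some opw \<and> kind opw = Wr \<and> concurrent opw op}"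
proof -
  define W where "W = {w. \<exists>opw. ops s w = Some opw \<and> kind opw = Wr \<and> concurrent opw op}"
  have "finite W"
    using wf unfolding ops_wf_def W_def by (auto intro: finite_subset [of _ "dom (ops s)"])
  moreover have "{t \<in> state_tags s t0. ts < t} \<subseteq> (\<lambda>w. the (put_tag (phase (the (ops s w))))) ` W"
  proof
    fix t assume t: "t \<in> {t \<in> state_tags s t0. ts < t}"
    then have "t \<noteq> t0" using ts unfolding completed_tags_before_def by auto
    then obtain w opw where w: "ops s w = Some opw" "kind opw = Wr" "put_tag (phase opw) = Some t"
      using t tw unfolding tags_of_writes_def by blast
    have "\<not> precedes opw op"
    proof
      assume "precedes opw op"
      then obtain r where r: "resp opw = Some r" "r < inv op" unfolding precedes_def by blast
      have "resp opw = None \<longleftrightarrow> (\<forall>t v. phase opw \<noteq> PDone t v)"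
        using w(1) wf unfolding ops_wf_def by blast
      then obtain v where "phase opw = PDone t v" using r(1) w(3) by auto
      then have "t \<in> completed_tags_before s t0 (inv op)"
        using w(1) r unfolding completed_tags_before_def by blast
      then show False using ts t by force
    qed
    moreover have "\<not> precedes op opw" using pending unfolding precedes_def by simp
    ultimately have "w \<in> W" using w unfolding W_def concurrent_def by blast
    then show "t \<in> (\<lambda>w. the (put_tag (phase (the (ops s w))))) ` W" using w by force
  qed
  ultimately show ?thesis unfolding W_def [symmetric] by (rule surj_card_le)
qed

lemma honest_replies_contain_common_tag:
  assumes inv: "protocol_inv C B k \<delta> t0 s"
    and op: "ops s \<rho> = Some op" "phase op = PGetData R"
    and few_writes: "card {w. \<exists>opw. ops s w = Some opw \<and> kind opw = Wr \<and> concurrent opw op} \<le> \<delta>"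
  shows "\<exists>t. on_honest_quorum C B k (\<lambda>j. \<forall>L. R j = Some L \<longrightarrow> (\<exists>e. (t, e) \<in> L))"
proof -
  have wf: "ops_wf s" and tw: "tags_of_writes s t0" and rt: "received_tags_known s t0"
    and rc: "replies_cover C B k \<delta> t0 s"
    using inv unfolding protocol_inv_def by simp_all
  have fin: "finite (state_tags s t0)" using wf finite_state_tags unfolding ops_wf_def by blast
  define ts where "ts = Max (completed_tags_before s t0 (inv op))"
  have "finite (completed_tags_before s t0 (inv op))"
    using fin completed_tags_before_subset by (rule finite_subset [rotated])
  moreover have "completed_tags_before s t0 (inv op) \<noteq> {}"
    unfolding completed_tags_before_def by simp
  ultimately have ts_in: "ts \<in> completed_tags_before s t0 (inv op)"
    and ts_max: "\<forall>t \<in> completed_tags_before s t0 (inv op). t \<le> ts"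
    unfolding ts_def by simp_all
  have "resp op = None" using wf op unfolding ops_wf_def by auto
  then have few: "card {t \<in> state_tags s t0. ts < t} \<le> \<delta>"
    using card_tags_above_le_concurrent_writes [OF wf tw _ ts_max] few_writes by linarith
  have "on_honest_quorum C B k
      (\<lambda>j. covers \<delta> (lists s j) ts \<and> (\<forall>L. R j = Some L \<longrightarrow> covers \<delta> L ts))"
    using rc op ts_in unfolding replies_cover_def by blast
  then have "on_honest_quorum C B k (\<lambda>j. \<forall>L. R j = Some L \<longrightarrow> (\<exists>e. (ts, e) \<in> L))"
  proof (rule on_honest_quorum_mono)
    fix j assume cov: "covers \<delta> (lists s j) ts \<and> (\<forall>L. R j = Some L \<longrightarrow> covers \<delta> L ts)"
    show "\<forall>L. R j = Some L \<longrightarrow> (\<exists>e. (ts, e) \<in> L)"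
    proof (intro allI impI)
      fix L assume L: "R j = Some L"
      have "fst ` L \<subseteq> state_tags s t0" using rt op L unfolding received_tags_known_def by blast
      then show "\<exists>e. (ts, e) \<in> L" using cov L mem_of_covers [OF _ _ fin few] by blast
    qed
  qed
  then show ?thesis by blast
qed

theorem mainTheorem2:
  fixes C B :: "'n set" and k b \<delta> :: nat
    and enc :: "'v \<Rightarrow> 'n \<Rightarrow> 'e" and dec :: "('n \<times> 'e) set \<Rightarrow> 'v"
    and t0 :: "'w::linorder tag" and v0 :: 'v
    and s :: "('n, 'w, 'v, 'e) state" and \<rho> :: nat and op :: "('n, 'w, 'v, 'e) opst"
    and R :: "'n \<Rightarrow> ('w tag \<times> 'e) set option" and Q :: "'n set"
  assumes "finite C" and "1 \<le> k" and "k \<le> card C"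
    and "B \<subseteq> C" and "card B \<le> b" and "real b < (real (card C) - real k) / 3"
    and "1 \<le> \<delta>"
    and "reachable C B k \<delta> enc dec t0 v0 s"
    and "ops s \<rho> = Some op" and "kind op = Rd" and "phase op = PGetData R"
    and "Q \<subseteq> C" and "card Q = qsize (card C) k" and "\<forall>j\<in>Q. R j \<noteq> None"
    and "card {w. \<exists>opw. ops s w = Some opw \<and> kind opw = Wr \<and> concurrent opw op} \<le> \<delta>"
  shows "\<exists>t v. get_data_result k dec Q R = Some (t, v)"
proof -
  have "protocol_inv C B k \<delta> t0 s"
    using assms(8,1,4,2,3) by (rule protocol_inv_reachable)
  then obtain t where "on_honest_quorum C B k (\<lambda>j. \<forall>L. R j = Some L \<longrightarrow> (\<exists>e. (t, e) \<in> L))"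
    using honest_replies_contain_common_tag assms(9,11,15) by blast
  then obtain G where G: "G \<subseteq> C - B" "qsize (card C) k \<le> card G + card B"
    and G_replies: "\<forall>j\<in>G. \<forall>L. R j = Some L \<longrightarrow> (\<exists>e. (t, e) \<in> L)"
    unfolding on_honest_quorum_def by blast
  have "real (card B) < (real (card C) - real k) / 3" using assms(5,6) by linarith
  then have "k \<le> card (G \<inter> Q)"
    using card_inter_quorum_ge [OF assms(1) _ assms(12) G(2) assms(13)] G(1) by blast
  also have "\<dots> \<le> card {j \<in> Q. \<exists>e. (t, e) \<in> the (R j)}"
    using G_replies assms(1,12,14) by (intro card_mono) (auto intro: finite_subset)
  finally show ?thesis by (rule get_data_result_defined)
qed

end
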